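(* Let $(X,d,f)$ be a TDS, $\alpha\ge0$, $s>0$, $n\in\mathbb N$, $\varepsilon>0$ and $\varphi\in C(X,\mathbb R)$ with $\varphi>0$. Let $K$ be a non-empty compact subset of $X$. If $c:=W^\alpha(K,s,\varepsilon,n,\varphi)>0$, then there exists a Borel probability measure $\mu$ on $X$ with $\mu(K)=1$ such that for all $x\in X$ and all $m\ge n$, $$\mu(B^\alpha_m(x,\varepsilon))\le\frac1c\exp(-s\,S_m\varphi(x)).$$
   Context: A TDS $(X,d,f)$: compact metric space and continuous $f$. $S_n\varphi(x)=\sum_{j=0}^{n-1}\varphi(f^jx)$; $d_n^\alpha(x,y)=\max_{0\le i\le n-1}e^{\alpha i}d(f^ix,f^iy)$; $B_n^\alpha(x,\varepsilon)=\{y:d_n^\alpha(x,y)<\varepsilon\}$. For a bounded $\xi:X\to\mathbb R$, $W^\alpha(\xi,s,\varepsilon,n,\varphi)=\inf\sum_ic_i\exp(-s\,S_{n_i}\varphi(x_i))$, the infimum over all finite or countable collections $\{(B^\alpha_{n_i}(x_i,\varepsilon),c_i)\}$ with $x_i\in X$, $n_i\ge n$, $0<c_i<\infty$ and $\sum_ic_i\chi_{B^\alpha_{n_i}(x_i,\varepsilon)}\ge\xi$; and $W^\alpha(K,s,\varepsilon,n,\varphi)=W^\alpha(\chi_K,s,\varepsilon,n,\varphi)$. *)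

theory Defs
  imports "HOL-Probability.Probability"
begin

definition birkhoff_sum :: "('a \<Rightarrow> 'a) \<Rightarrow> ('a \<Rightarrow> real) \<Rightarrow> nat \<Rightarrow> 'a \<Rightarrow> real" where
  "birkhoff_sum f \<phi> n x = (\<Sum>j<n. \<phi> ((f ^^ j) x))"

text \<open>Weighted Bowen metric d_n^alpha (for n >= 1).\<close>
definition dist_bowen :: "('a::metric_space \<Rightarrow> 'a) \<Rightarrow> real \<Rightarrow> nat \<Rightarrow> 'a \<Rightarrow> 'a \<Rightarrow> real" where
  "dist_bowen f \<alpha> n x y = Max ((\<lambda>i. exp (\<alpha> * real i) * dist ((f ^^ i) x) ((f ^^ i) y)) ` {..<n})"

definition bowen_ball :: "('a::metric_space \<Rightarrow> 'a) \<Rightarrow> real \<Rightarrow> nat \<Rightarrow> 'a \<Rightarrow> real \<Rightarrow> 'a set" where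
  "bowen_ball f \<alpha> n x \<epsilon> = {y. dist_bowen f \<alpha> n x y < \<epsilon>}"

text \<open>W^alpha(xi, s, eps, n, phi): infimum over finite or countable families, indexed by
  a set I of naturals, of centres x i, times k i >= n and weights c i > 0 whose weighted
  indicator sum dominates xi.\<close>
definition W_alpha :: "('a::metric_space \<Rightarrow> 'a) \<Rightarrow> real \<Rightarrow> ('a \<Rightarrow> real) \<Rightarrow> real \<Rightarrow> real \<Rightarrow> nat
    \<Rightarrow> ('a \<Rightarrow> real) \<Rightarrow> ennreal" where
  "W_alpha f \<alpha> \<xi> s \<epsilon> n \<phi> =
     (INF F \<in> {(I :: nat set, x :: nat \<Rightarrow> 'a, k :: nat \<Rightarrow> nat, c :: nat \<Rightarrow> real).
                 (\<forall>i\<in>I. n \<le> k i \<and> 0 < c i) \<and>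
                 (\<forall>y. ennreal (\<xi> y) \<le>
                       (\<Sum>i. if i \<in> I then ennreal (c i) * indicator (bowen_ball f \<alpha> (k i) (x i) \<epsilon>) y
                             else 0))}.
        (case F of (I, x, k, c) \<Rightarrow>
          (\<Sum>i. if i \<in> I then ennreal (c i * exp (- s * birkhoff_sum f \<phi> (k i) (x i))) else 0)))"

definition W_alpha_set :: "('a::metric_space \<Rightarrow> 'a) \<Rightarrow> real \<Rightarrow> 'a set \<Rightarrow> real \<Rightarrow> real \<Rightarrow> nat
    \<Rightarrow> ('a \<Rightarrow> real) \<Rightarrow> ennreal" where
  "W_alpha_set f \<alpha> K s \<epsilon> n \<phi> = W_alpha f \<alpha> (indicator K) s \<epsilon> n \<phi>"

end

theory Submission
  imports Defs
begin

(*
  The functional p g = W(chi_K g) / c is sublinear on bounded functions (covers can be merged and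
  rescaled) with p 1 = 1, so by Hahn-Banach some linear L <= p has L 1 = 1. On indicator functions
  L is a finitely additive probability content nu with nu K = 1 and nu A <= W(chi_B) / c <=
  exp (-s S_m phi x) / c whenever A lies in a Bowen ball B = B_m^alpha(x, eps) with m >= n.
  Regularising nu from inside by closed sets and then from outside by open sets turns it, on the
  compact space X, into a Borel probability measure mu with nu C <= mu C for closed C and
  mu U <= sup {nu C | C closed, C <= U} for open U; K is closed and Bowen balls are open.
*)

section \<open>Subadditivity and homogeneity of \<open>W\<^sup>\<alpha>\<close>\<close>

lemma suminf_ennreal_even_odd:
  fixes g :: "nat \<Rightarrow> ennreal"
  shows "(\<Sum>j. g j) = (\<Sum>i. g (2 * i)) + (\<Sum>i. g (2 * i + 1))"
proof -
  have "(\<lambda>i. sum g {i * 2..<i * 2 + 2}) sums (\<Sum>j. g j)"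
    by (rule sums_group) (auto intro: summable_sums summableI)
  moreover have "sum g {i * 2..<i * 2 + 2} = g (2 * i) + g (2 * i + 1)" for i
    by (simp add: mult.commute numeral_2_eq_2)
  ultimately have "(\<Sum>j. g j) = (\<Sum>i. g (2 * i) + g (2 * i + 1))"
    by (simp add: sums_iff)
  also have "\<dots> = (\<Sum>i. g (2 * i)) + (\<Sum>i. g (2 * i + 1))"
    by (rule suminf_add[symmetric]) (auto intro: summableI)
  finally show ?thesis .
qed

lemma ennreal_le_Inf_add_Inf:
  fixes x :: ennreal
  assumes "\<And>a b. a \<in> A \<Longrightarrow> b \<in> B \<Longrightarrow> x \<le> a + b"
  shows "x \<le> Inf A + Inf B"
proof (cases "A = {} \<or> B = {}")
  case True
  then show ?thesis by (auto simp: top_add)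
next
  case False
  have Inf_add: "Inf A + b = Inf ((\<lambda>a. a + b) ` A)" for b
    by (rule continuous_at_Inf_mono)
      (use False in \<open>auto simp: mono_def intro: add_right_mono continuous_intros\<close>)
  have add_Inf: "Inf A + Inf B = Inf ((\<lambda>b. Inf A + b) ` B)"
    by (rule continuous_at_Inf_mono)
      (use False in \<open>auto simp: mono_def intro: add_left_mono continuous_intros\<close>)
  have "x \<le> Inf A + b" if "b \<in> B" for b
    unfolding Inf_add using that by (auto intro!: Inf_greatest assms)
  then show ?thesis
    unfolding add_Inf by (auto intro!: Inf_greatest)
qed

lemma ennreal_le_mult_Inf:
  fixes x t :: ennreal
  assumes "\<And>a. a \<in> A \<Longrightarrow> x \<le> t * a" and "0 < t" and "t < top"
  shows "x \<le> t * Inf A"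
proof (cases "A = {}")
  case True
  then show ?thesis using assms by (simp add: ennreal_mult_top)
next
  case False
  have "continuous_on UNIV ((*) t)"
    by (rule ennreal_continuous_on_cmult) (auto simp: assms continuous_on_id)
  then have "continuous (at_right (Inf A)) ((*) t)"
    by (metis continuous_on_eq_continuous_within UNIV_I continuous_within_subset subset_UNIV)
  then have "t * Inf A = Inf ((*) t ` A)"
    by (rule continuous_at_Inf_mono[rotated]) (use False in \<open>auto simp: mono_def intro: mult_left_mono\<close>)
  then show ?thesis by (auto intro!: Inf_greatest assms)
qed

lemma ennreal_plus_le: "ennreal (a + b) \<le> ennreal a + ennreal b"
proof (cases "0 \<le> a \<and> 0 \<le> b")
  case True
  then show ?thesis by (simp add: ennreal_plus)
next
  case False
  then have "ennreal (a + b) \<le> ennreal a \<or> ennreal (a + b) \<le> ennreal b"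
    by (auto intro: ennreal_leI)
  then show ?thesis
    by (auto intro: order_trans add_increasing add_increasing2)
qed

definition W_alpha_covers :: "('a::metric_space \<Rightarrow> 'a) \<Rightarrow> real \<Rightarrow> ('a \<Rightarrow> real) \<Rightarrow> real \<Rightarrow> nat
    \<Rightarrow> (nat set \<times> (nat \<Rightarrow> 'a) \<times> (nat \<Rightarrow> nat) \<times> (nat \<Rightarrow> real)) set" where
  "W_alpha_covers f \<alpha> \<xi> \<epsilon> n = {(I, x, k, c).
     (\<forall>i\<in>I. n \<le> k i \<and> 0 < c i) \<and>
     (\<forall>y. ennreal (\<xi> y) \<le>
        (\<Sum>i. if i \<in> I then ennreal (c i) * indicator (bowen_ball f \<alpha> (k i) (x i) \<epsilon>) y else 0))}"

definition W_alpha_cost :: "('a \<Rightarrow> 'a) \<Rightarrow> real \<Rightarrow> ('a \<Rightarrow> real)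
    \<Rightarrow> (nat set \<times> (nat \<Rightarrow> 'a) \<times> (nat \<Rightarrow> nat) \<times> (nat \<Rightarrow> real)) \<Rightarrow> ennreal" where
  "W_alpha_cost f s \<phi> F = (case F of (I, x, k, c) \<Rightarrow>
     (\<Sum>i. if i \<in> I then ennreal (c i * exp (- s * birkhoff_sum f \<phi> (k i) (x i))) else 0))"

lemma W_alpha_eq_INF_cost:
  "W_alpha f \<alpha> \<xi> s \<epsilon> n \<phi> = (INF F\<in>W_alpha_covers f \<alpha> \<xi> \<epsilon> n. W_alpha_cost f s \<phi> F)"
  unfolding W_alpha_def W_alpha_covers_def W_alpha_cost_def by simp

lemma W_alpha_le_cost:
  "F \<in> W_alpha_covers f \<alpha> \<xi> \<epsilon> n \<Longrightarrow> W_alpha f \<alpha> \<xi> s \<epsilon> n \<phi> \<le> W_alpha_cost f s \<phi> F"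
  unfolding W_alpha_eq_INF_cost by (rule INF_lower)

lemma W_alpha_nonpos:
  assumes "\<And>y. \<xi> y \<le> 0"
  shows "W_alpha f \<alpha> \<xi> s \<epsilon> n \<phi> = 0"
proof -
  have "({}, undefined, undefined, undefined) \<in> W_alpha_covers f \<alpha> \<xi> \<epsilon> n"
    using assms by (simp add: W_alpha_covers_def ennreal_eq_0_iff)
  from W_alpha_le_cost[OF this, of s \<phi>] show ?thesis
    by (simp add: W_alpha_cost_def)
qed

lemma W_alpha_mono:
  assumes "\<And>y. \<xi> y \<le> \<xi>' y"
  shows "W_alpha f \<alpha> \<xi> s \<epsilon> n \<phi> \<le> W_alpha f \<alpha> \<xi>' s \<epsilon> n \<phi>"
  unfolding W_alpha_eq_INF_cost
proof (rule INF_superset_mono)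
  show "W_alpha_covers f \<alpha> \<xi>' \<epsilon> n \<subseteq> W_alpha_covers f \<alpha> \<xi> \<epsilon> n"
    unfolding W_alpha_covers_def using assms by (auto intro: order_trans[OF ennreal_leI])
qed simp

lemma W_alpha_add_le:
  assumes "\<And>y. \<xi> y \<le> \<xi>\<^sub>1 y + \<xi>\<^sub>2 y"
  shows "W_alpha f \<alpha> \<xi> s \<epsilon> n \<phi> \<le> W_alpha f \<alpha> \<xi>\<^sub>1 s \<epsilon> n \<phi> + W_alpha f \<alpha> \<xi>\<^sub>2 s \<epsilon> n \<phi>"
  unfolding W_alpha_eq_INF_cost
proof (rule ennreal_le_Inf_add_Inf, elim imageE, clarify)
  fix I\<^sub>1 x\<^sub>1 k\<^sub>1 c\<^sub>1 I\<^sub>2 x\<^sub>2 k\<^sub>2 c\<^sub>2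
  assume F\<^sub>1: "(I\<^sub>1, x\<^sub>1, k\<^sub>1, c\<^sub>1) \<in> W_alpha_covers f \<alpha> \<xi>\<^sub>1 \<epsilon> n"
    and F\<^sub>2: "(I\<^sub>2, x\<^sub>2, k\<^sub>2, c\<^sub>2) \<in> W_alpha_covers f \<alpha> \<xi>\<^sub>2 \<epsilon> n"
  define I where "I = {j. if even j then j div 2 \<in> I\<^sub>1 else j div 2 \<in> I\<^sub>2}"
  define x where "x j = (if even j then x\<^sub>1 (j div 2) else x\<^sub>2 (j div 2))" for j
  define k where "k j = (if even j then k\<^sub>1 (j div 2) else k\<^sub>2 (j div 2))" for j
  define c where "c j = (if even j then c\<^sub>1 (j div 2) else c\<^sub>2 (j div 2))" for j
  let ?F = "(I, x, k, c)"
  have "?F \<in> W_alpha_covers f \<alpha> \<xi> \<epsilon> n"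
    unfolding W_alpha_covers_def
  proof (clarify, intro conjI allI ballI)
    fix i
    assume "i \<in> I"
    then show "n \<le> k i" "0 < c i"
      using F\<^sub>1 F\<^sub>2 by (auto simp: W_alpha_covers_def I_def x_def k_def c_def split: if_splits)
  next
    fix y
    have "ennreal (\<xi> y) \<le> ennreal (\<xi>\<^sub>1 y) + ennreal (\<xi>\<^sub>2 y)"
      using assms ennreal_plus_le order_trans ennreal_leI by blast
    also have "\<dots> \<le> (\<Sum>i. if i \<in> I\<^sub>1 then ennreal (c\<^sub>1 i) * indicator (bowen_ball f \<alpha> (k\<^sub>1 i) (x\<^sub>1 i) \<epsilon>) y else 0)
        + (\<Sum>i. if i \<in> I\<^sub>2 then ennreal (c\<^sub>2 i) * indicator (bowen_ball f \<alpha> (k\<^sub>2 i) (x\<^sub>2 i) \<epsilon>) y else 0)"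
      using F\<^sub>1 F\<^sub>2 unfolding W_alpha_covers_def by (intro add_mono) auto
    also have "\<dots> = (\<Sum>i. if i \<in> I then ennreal (c i)
        * indicator (bowen_ball f \<alpha> (k i) (x i) \<epsilon>) y else 0)"
      unfolding I_def x_def k_def c_def by (subst suminf_ennreal_even_odd) (simp cong: if_cong)
    finally show "ennreal (\<xi> y) \<le> \<dots>" .
  qed
  then have "(INF F\<in>W_alpha_covers f \<alpha> \<xi> \<epsilon> n. W_alpha_cost f s \<phi> F) \<le> W_alpha_cost f s \<phi> ?F"
    by (rule INF_lower)
  also have "W_alpha_cost f s \<phi> ?F
      = W_alpha_cost f s \<phi> (I\<^sub>1, x\<^sub>1, k\<^sub>1, c\<^sub>1) + W_alpha_cost f s \<phi> (I\<^sub>2, x\<^sub>2, k\<^sub>2, c\<^sub>2)"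
    unfolding W_alpha_cost_def I_def x_def k_def c_def by (subst suminf_ennreal_even_odd) (simp cong: if_cong)
  finally show "(INF F\<in>W_alpha_covers f \<alpha> \<xi> \<epsilon> n. W_alpha_cost f s \<phi> F)
      \<le> W_alpha_cost f s \<phi> (I\<^sub>1, x\<^sub>1, k\<^sub>1, c\<^sub>1) + W_alpha_cost f s \<phi> (I\<^sub>2, x\<^sub>2, k\<^sub>2, c\<^sub>2)" .
qed

lemma W_alpha_scale_le:
  assumes "t > 0"
  shows "W_alpha f \<alpha> (\<lambda>y. t * \<xi> y) s \<epsilon> n \<phi> \<le> ennreal t * W_alpha f \<alpha> \<xi> s \<epsilon> n \<phi>"
  unfolding W_alpha_eq_INF_cost
proof (rule ennreal_le_mult_Inf, clarify)
  fix I x k c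
  assume F: "(I, x, k, c) \<in> W_alpha_covers f \<alpha> \<xi> \<epsilon> n"
  let ?tF = "(I, x, k, \<lambda>i. t * c i)"
  have "?tF \<in> W_alpha_covers f \<alpha> (\<lambda>y. t * \<xi> y) \<epsilon> n"
    unfolding W_alpha_covers_def
  proof (clarify, intro conjI allI ballI)
    fix i
    assume "i \<in> I"
    then show "n \<le> k i" "0 < t * c i"
      using F assms by (auto simp: W_alpha_covers_def)
  next
    fix y
    have "ennreal (t * \<xi> y) = ennreal t * ennreal (\<xi> y)"
      using assms by (simp add: ennreal_mult')
    also have "\<dots> \<le> ennreal t * (\<Sum>i. if i \<in> I then ennreal (c i)
        * indicator (bowen_ball f \<alpha> (k i) (x i) \<epsilon>) y else 0)"
      using F unfolding W_alpha_covers_def by (intro mult_left_mono) auto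
    also have "\<dots> = (\<Sum>i. if i \<in> I then ennreal (t * c i)
        * indicator (bowen_ball f \<alpha> (k i) (x i) \<epsilon>) y else 0)"
      unfolding ennreal_suminf_cmult[symmetric]
      using assms by (intro suminf_cong) (auto simp: ennreal_mult' mult.assoc)
    finally show "ennreal (t * \<xi> y) \<le> \<dots>" .
  qed
  then have "(INF F\<in>W_alpha_covers f \<alpha> (\<lambda>y. t * \<xi> y) \<epsilon> n. W_alpha_cost f s \<phi> F)
      \<le> W_alpha_cost f s \<phi> ?tF"
    by (rule INF_lower)
  also have "\<dots> = ennreal t * W_alpha_cost f s \<phi> (I, x, k, c)"
    unfolding W_alpha_cost_def prod.case using assms
    by (subst ennreal_suminf_cmult[symmetric], intro suminf_cong)
      (auto simp: ennreal_mult' mult.assoc)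
  finally show "(INF F\<in>W_alpha_covers f \<alpha> (\<lambda>y. t * \<xi> y) \<epsilon> n. W_alpha_cost f s \<phi> F)
      \<le> ennreal t * W_alpha_cost f s \<phi> (I, x, k, c)" .
qed (use assms in auto)

lemma W_alpha_scale:
  assumes "t > 0"
  shows "W_alpha f \<alpha> (\<lambda>y. t * \<xi> y) s \<epsilon> n \<phi> = ennreal t * W_alpha f \<alpha> \<xi> s \<epsilon> n \<phi>"
proof (rule antisym)
  show "W_alpha f \<alpha> (\<lambda>y. t * \<xi> y) s \<epsilon> n \<phi> \<le> ennreal t * W_alpha f \<alpha> \<xi> s \<epsilon> n \<phi>"
    using assms by (rule W_alpha_scale_le)
  have "W_alpha f \<alpha> \<xi> s \<epsilon> n \<phi> = W_alpha f \<alpha> (\<lambda>y. (1 / t) * (t * \<xi> y)) s \<epsilon> n \<phi>"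
    using assms by simp
  also have "\<dots> \<le> ennreal (1 / t) * W_alpha f \<alpha> (\<lambda>y. t * \<xi> y) s \<epsilon> n \<phi>"
    using assms by (intro W_alpha_scale_le) simp
  finally have "ennreal t * W_alpha f \<alpha> \<xi> s \<epsilon> n \<phi>
      \<le> ennreal t * (ennreal (1 / t) * W_alpha f \<alpha> (\<lambda>y. t * \<xi> y) s \<epsilon> n \<phi>)"
    by (rule mult_left_mono) simp
  also have "\<dots> = W_alpha f \<alpha> (\<lambda>y. t * \<xi> y) s \<epsilon> n \<phi>"
    using assms by (simp add: mult.assoc[symmetric] ennreal_mult[symmetric])
  finally show "ennreal t * W_alpha f \<alpha> \<xi> s \<epsilon> n \<phi> \<le> W_alpha f \<alpha> (\<lambda>y. t * \<xi> y) s \<epsilon> n \<phi>" .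
qed

lemma W_alpha_le_bowen_ball:
  assumes "n \<le> m" and "\<And>y. \<xi> y \<le> indicator (bowen_ball f \<alpha> m x \<epsilon>) y"
  shows "W_alpha f \<alpha> \<xi> s \<epsilon> n \<phi> \<le> ennreal (exp (- s * birkhoff_sum f \<phi> m x))"
proof -
  have single: "(\<Sum>i. if i = 0 then a else 0) = a" for a :: ennreal
    by (subst suminf_finite[of "{0}"]) auto
  have "ennreal (\<xi> y) \<le> indicator (bowen_ball f \<alpha> m x \<epsilon>) y" for y
    using assms(2)[of y] by (auto simp: indicator_def ennreal_eq_0_iff ennreal_le_1)
  then have "({0}, \<lambda>_. x, \<lambda>_. m, \<lambda>_. 1) \<in> W_alpha_covers f \<alpha> \<xi> \<epsilon> n"
    unfolding W_alpha_covers_def using assms(1) by (simp add: single)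
  from W_alpha_le_cost[OF this, of s \<phi>] show ?thesis
    by (simp add: W_alpha_cost_def single)
qed

section \<open>Hahn--Banach extension for sublinear functionals on function spaces\<close>

locale sublinear_functional =
  fixes V :: "('a \<Rightarrow> real) set" and p :: "('a \<Rightarrow> real) \<Rightarrow> real"
  assumes add_closed: "g \<in> V \<Longrightarrow> h \<in> V \<Longrightarrow> (\<lambda>y. g y + h y) \<in> V"
    and scale_closed: "g \<in> V \<Longrightarrow> (\<lambda>y. t * g y) \<in> V"
    and subadditive: "g \<in> V \<Longrightarrow> h \<in> V \<Longrightarrow> p (\<lambda>y. g y + h y) \<le> p g + p h"
    and positively_homogeneous: "g \<in> V \<Longrightarrow> t > 0 \<Longrightarrow> p (\<lambda>y. t * g y) = t * p g"
begin

lemma diff_closed: "g \<in> V \<Longrightarrow> h \<in> V \<Longrightarrow> (\<lambda>y. g y - h y) \<in> V"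
  using add_closed[OF _ scale_closed, of g h "-1"] by simp

text \<open>A linear functional dominated by \<open>p\<close> on a subspace of \<open>V\<close>, represented by its graph.\<close>

definition dominated_graph :: "(('a \<Rightarrow> real) \<times> real) set \<Rightarrow> bool" where
  "dominated_graph G \<longleftrightarrow> G \<subseteq> V \<times> UNIV \<and>
     (\<forall>g a h b. (g, a) \<in> G \<longrightarrow> (h, b) \<in> G \<longrightarrow> ((\<lambda>y. g y + h y), a + b) \<in> G) \<and>
     (\<forall>g a t. (g, a) \<in> G \<longrightarrow> ((\<lambda>y. t * g y), t * a) \<in> G) \<and>
     (\<forall>g a b. (g, a) \<in> G \<longrightarrow> (g, b) \<in> G \<longrightarrow> a = b) \<and>
     (\<forall>g a. (g, a) \<in> G \<longrightarrow> a \<le> p g)"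

lemma dominated_graphD:
  assumes "dominated_graph G"
  shows dominated_graph_subset: "(g, a) \<in> G \<Longrightarrow> g \<in> V"
    and dominated_graph_add: "(g, a) \<in> G \<Longrightarrow> (h, b) \<in> G \<Longrightarrow> ((\<lambda>y. g y + h y), a + b) \<in> G"
    and dominated_graph_scale: "(g, a) \<in> G \<Longrightarrow> ((\<lambda>y. t * g y), t * a) \<in> G"
    and dominated_graph_unique: "(g, a) \<in> G \<Longrightarrow> (g, b) \<in> G \<Longrightarrow> a = b"
    and dominated_graph_le: "(g, a) \<in> G \<Longrightarrow> a \<le> p g"
  using assms by (auto simp: dominated_graph_def)

lemma dominated_graphI:
  assumes "\<And>g a. (g, a) \<in> G \<Longrightarrow> g \<in> V"
    and "\<And>g a h b. (g, a) \<in> G \<Longrightarrow> (h, b) \<in> G \<Longrightarrow> ((\<lambda>y. g y + h y), a + b) \<in> G"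
    and "\<And>g a t. (g, a) \<in> G \<Longrightarrow> ((\<lambda>y. t * g y), t * a) \<in> G"
    and "\<And>g a b. (g, a) \<in> G \<Longrightarrow> (g, b) \<in> G \<Longrightarrow> a = b"
    and "\<And>g a. (g, a) \<in> G \<Longrightarrow> a \<le> p g"
  shows "dominated_graph G"
  using assms unfolding dominated_graph_def by auto

lemma dominated_graph_chain_Union:
  assumes "subset.chain {G. dominated_graph G} C"
  shows "dominated_graph (\<Union>C)"
proof -
  have dom: "dominated_graph G" if "G \<in> C" for G
    using assms that by (auto simp: subset_chain_def)
  have two: "\<exists>G\<in>C. (g, a) \<in> G \<and> (h, b) \<in> G"
    if ga: "(g, a) \<in> \<Union>C" and hb: "(h, b) \<in> \<Union>C" for g a h b
  proof -
    obtain G H where "G \<in> C" "H \<in> C" "(g, a) \<in> G" "(h, b) \<in> H"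
      using ga hb by blast
    moreover have "G \<subseteq> H \<or> H \<subseteq> G"
      using assms calculation(1,2) by (auto simp: subset_chain_def)
    ultimately show ?thesis
      by blast
  qed
  show ?thesis
  proof (rule dominated_graphI)
    fix g a h b
    assume "(g, a) \<in> \<Union>C" "(h, b) \<in> \<Union>C"
    then obtain G where "G \<in> C" "(g, a) \<in> G" "(h, b) \<in> G"
      using two by blast
    then show "((\<lambda>y. g y + h y), a + b) \<in> \<Union>C"
      by (blast dest: dominated_graph_add[OF dom])
  next
    fix g a b
    assume "(g, a) \<in> \<Union>C" "(g, b) \<in> \<Union>C"
    then show "a = b"
      using two by (blast dest: dominated_graph_unique[OF dom])
  qed (auto dest: dominated_graph_subset[OF dom] dominated_graph_scale[OF dom]
      dominated_graph_le[OF dom])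
qed

lemma dominated_graph_zero:
  assumes "dominated_graph G" and "G \<noteq> {}"
  shows "((\<lambda>_. 0), 0) \<in> G"
  using assms dominated_graph_scale[OF assms(1), of _ _ 0] by fastforce

text \<open>
  These are the bounds under which assigning \<open>r\<close> to \<open>v\<close> keeps the graph dominated; every lower
  bound lies below every upper bound by subadditivity of \<open>p\<close>.
\<close>

lemma dominated_graph_extension_value:
  assumes G: "dominated_graph G" "G \<noteq> {}" and v: "v \<in> V"
  obtains r where "\<And>g a. (g, a) \<in> G \<Longrightarrow> a - p (\<lambda>y. g y - v y) \<le> r"
    and "\<And>g a. (g, a) \<in> G \<Longrightarrow> r \<le> p (\<lambda>y. g y + v y) - a"
proof -
  have gap: "b - p (\<lambda>y. h y - v y) \<le> p (\<lambda>y. g y + v y) - a"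
    if "(h, b) \<in> G" "(g, a) \<in> G" for h b g a
  proof -
    have "b + a \<le> p (\<lambda>y. h y + g y)"
      using dominated_graph_le[OF G(1) dominated_graph_add[OF G(1) that]] .
    also have "(\<lambda>y. h y + g y) = (\<lambda>y. (h y - v y) + (g y + v y))"
      by auto
    also have "p \<dots> \<le> p (\<lambda>y. h y - v y) + p (\<lambda>y. g y + v y)"
      using that v dominated_graph_subset[OF G(1)]
      by (intro subadditive diff_closed add_closed) auto
    finally show ?thesis by simp
  qed
  define S where "S = {b - p (\<lambda>y. h y - v y) | h b. (h, b) \<in> G}"
  have "S \<noteq> {}"
    using G by (auto simp: S_def)
  moreover have "bdd_above S"
    unfolding bdd_above_def S_def using gap[OF _ dominated_graph_zero[OF G]] by auto
  ultimately show ?thesis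
    by (intro that[of "Sup S"] cSup_upper cSup_least) (auto simp: S_def intro: gap)
qed

lemma dominated_graph_extension_le:
  assumes G: "dominated_graph G" and v: "v \<in> V" and g: "(g, a) \<in> G"
    and r_ge: "\<And>g a. (g, a) \<in> G \<Longrightarrow> a - p (\<lambda>y. g y - v y) \<le> r"
    and r_le: "\<And>g a. (g, a) \<in> G \<Longrightarrow> r \<le> p (\<lambda>y. g y + v y) - a"
  shows "a + t * r \<le> p (\<lambda>y. g y + t * v y)"
proof -
  have gV: "g \<in> V"
    using dominated_graph_subset[OF G g] .
  consider "t = 0" | "t > 0" | "t < 0"
    by linarith
  then show ?thesis
  proof cases
    case 1
    then show ?thesis using dominated_graph_le[OF G g] by simp
  next
    case 2
    have "r \<le> p (\<lambda>y. (1 / t) * g y + v y) - (1 / t) * a"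
      using r_le[OF dominated_graph_scale[OF G g]] .
    then have "a + t * r \<le> t * p (\<lambda>y. (1 / t) * g y + v y)"
      using 2 by (simp add: field_simps)
    also have "\<dots> = p (\<lambda>y. t * ((1 / t) * g y + v y))"
      using 2 gV v by (intro positively_homogeneous[symmetric] add_closed scale_closed) auto
    also have "(\<lambda>y. t * ((1 / t) * g y + v y)) = (\<lambda>y. g y + t * v y)"
      using 2 by (simp add: distrib_left)
    finally show ?thesis .
  next
    case 3
    define u where "u = - t"
    have u: "u > 0"
      using 3 by (simp add: u_def)
    have "(1 / u) * a - p (\<lambda>y. (1 / u) * g y - v y) \<le> r"
      using r_ge[OF dominated_graph_scale[OF G g]] .
    then have "a - u * r \<le> u * p (\<lambda>y. (1 / u) * g y - v y)"
      using u by (simp add: field_simps)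
    also have "\<dots> = p (\<lambda>y. u * ((1 / u) * g y - v y))"
      using u gV v by (intro positively_homogeneous[symmetric] diff_closed scale_closed) auto
    also have "(\<lambda>y. u * ((1 / u) * g y - v y)) = (\<lambda>y. g y + t * v y)"
      using u by (simp add: right_diff_distrib u_def)
    finally show ?thesis
      by (simp add: u_def)
  qed
qed

definition extend_graph :: "(('a \<Rightarrow> real) \<times> real) set \<Rightarrow> ('a \<Rightarrow> real) \<Rightarrow> real
    \<Rightarrow> (('a \<Rightarrow> real) \<times> real) set" where
  "extend_graph G v r = {((\<lambda>y. g y + t * v y), a + t * r) | g a t. (g, a) \<in> G}"

lemma extend_graphI: "(g, a) \<in> G \<Longrightarrow> ((\<lambda>y. g y + t * v y), a + t * r) \<in> extend_graph G v r"
  unfolding extend_graph_def by blast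

lemma extend_graphE:
  assumes "(h, b) \<in> extend_graph G v r"
  obtains g a t where "(g, a) \<in> G" "h = (\<lambda>y. g y + t * v y)" "b = a + t * r"
  using assms unfolding extend_graph_def by blast

lemma extend_graph_unique:
  assumes G: "dominated_graph G" and new: "\<nexists>a. (v, a) \<in> G"
    and "(h, b) \<in> extend_graph G v r" "(h, b') \<in> extend_graph G v r"
  shows "b = b'"
proof -
  obtain g a t g' a' t' where g: "(g, a) \<in> G" "h = (\<lambda>y. g y + t * v y)" "b = a + t * r"
    and g': "(g', a') \<in> G" "h = (\<lambda>y. g' y + t' * v y)" "b' = a' + t' * r"
    using assms(3,4) by (elim extend_graphE)
  have eq: "g y - g' y = (t' - t) * v y" for y
    using fun_cong[OF trans[OF g(2)[symmetric] g'(2)], of y] by (simp add: algebra_simps)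
  have "t = t'"
  proof (rule ccontr)
    assume "t \<noteq> t'"
    have "((\<lambda>y. (1 / (t' - t)) * (g y + (-1) * g' y)), (1 / (t' - t)) * (a + (-1) * a')) \<in> G"
      using g g' G by (intro dominated_graph_scale dominated_graph_add) auto
    moreover have "(\<lambda>y. (1 / (t' - t)) * (g y + (-1) * g' y)) = v"
      using eq \<open>t \<noteq> t'\<close> by (simp add: fun_eq_iff field_simps)
    ultimately show False
      using new by auto
  qed
  moreover from this have "g = g'"
    using eq by (simp add: fun_eq_iff)
  ultimately show ?thesis
    using dominated_graph_unique[OF G] g g' by simp
qed

lemma dominated_graph_extend_graph:
  assumes G: "dominated_graph G" and v: "v \<in> V" and new: "\<nexists>a. (v, a) \<in> G"
    and r_ge: "\<And>g a. (g, a) \<in> G \<Longrightarrow> a - p (\<lambda>y. g y - v y) \<le> r"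
    and r_le: "\<And>g a. (g, a) \<in> G \<Longrightarrow> r \<le> p (\<lambda>y. g y + v y) - a"
  shows "dominated_graph (extend_graph G v r)"
proof (rule dominated_graphI)
  fix h b
  assume "(h, b) \<in> extend_graph G v r"
  then obtain g a t where "(g, a) \<in> G" "h = (\<lambda>y. g y + t * v y)" "b = a + t * r"
    by (elim extend_graphE)
  then show "h \<in> V" and "b \<le> p h"
    using dominated_graph_subset[OF G] dominated_graph_extension_le[OF G v _ r_ge r_le] v
    by (auto intro!: add_closed scale_closed)
next
  fix h b h' b'
  assume "(h, b) \<in> extend_graph G v r" "(h', b') \<in> extend_graph G v r"
  then obtain g a t g' a' t' where "(g, a) \<in> G" "h = (\<lambda>y. g y + t * v y)" "b = a + t * r"
    and "(g', a') \<in> G" "h' = (\<lambda>y. g' y + t' * v y)" "b' = a' + t' * r"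
    by (elim extend_graphE)
  moreover from this have "((\<lambda>y. (g y + g' y) + (t + t') * v y), (a + a') + (t + t') * r)
      \<in> extend_graph G v r"
    by (intro extend_graphI dominated_graph_add[OF G])
  ultimately show "((\<lambda>y. h y + h' y), b + b') \<in> extend_graph G v r"
    by (simp add: algebra_simps)
next
  fix h b s
  assume "(h, b) \<in> extend_graph G v r"
  then obtain g a t where "(g, a) \<in> G" "h = (\<lambda>y. g y + t * v y)" "b = a + t * r"
    by (elim extend_graphE)
  moreover from this have "((\<lambda>y. s * g y + (s * t) * v y), s * a + (s * t) * r) \<in> extend_graph G v r"
    by (intro extend_graphI dominated_graph_scale[OF G])
  ultimately show "((\<lambda>y. s * h y), s * b) \<in> extend_graph G v r"
    by (simp add: distrib_left mult.assoc)
qed (use extend_graph_unique[OF G new] in blast)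

lemma dominated_graph_extend:
  assumes G: "dominated_graph G" "G \<noteq> {}" and v: "v \<in> V" and new: "\<nexists>a. (v, a) \<in> G"
  obtains G' where "dominated_graph G'" "G \<subset> G'"
proof -
  obtain r where r_ge: "\<And>g a. (g, a) \<in> G \<Longrightarrow> a - p (\<lambda>y. g y - v y) \<le> r"
    and r_le: "\<And>g a. (g, a) \<in> G \<Longrightarrow> r \<le> p (\<lambda>y. g y + v y) - a"
    using dominated_graph_extension_value[OF G v] by blast
  have "G \<subseteq> extend_graph G v r"
    using extend_graphI[of _ _ G 0] by auto
  moreover have "(v, r) \<in> extend_graph G v r"
    using extend_graphI[OF dominated_graph_zero[OF G], of 1] by simp
  ultimately show ?thesis
    using that dominated_graph_extend_graph[OF G(1) v new r_ge r_le] new by blast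
qed

lemma dominated_graph_line:
  assumes e: "e \<in> V" and p_e: "\<And>t. t \<le> p (\<lambda>y. t * e y)"
  shows "dominated_graph {((\<lambda>y. t * e y), t) | t. True}" (is "dominated_graph ?G")
proof -
  have "p (\<lambda>_. 0) = 0"
    using positively_homogeneous[OF scale_closed[OF e], of 2 0] by simp
  then obtain z where "e z \<noteq> 0"
    using p_e[of 1] by force
  have lineI: "((\<lambda>y. t * e y), t) \<in> ?G" for t
    by blast
  show ?thesis
  proof (rule dominated_graphI)
    fix g a
    assume "(g, a) \<in> ?G"
    then show "g \<in> V" and "a \<le> p g"
      using scale_closed[OF e] p_e by auto
  next
    fix g a h b
    assume "(g, a) \<in> ?G" "(h, b) \<in> ?G"
    then show "((\<lambda>y. g y + h y), a + b) \<in> ?G"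
      using lineI[of "a + b"] by (auto simp: distrib_right)
  next
    fix g a t
    assume "(g, a) \<in> ?G"
    then show "((\<lambda>y. t * g y), t * a) \<in> ?G"
      using lineI[of "t * a"] by (auto simp: mult.assoc)
  next
    fix g a b
    assume "(g, a) \<in> ?G" "(g, b) \<in> ?G"
    then have "a * e z = b * e z"
      by (auto dest: fun_cong[of _ _ z])
    then show "a = b"
      using \<open>e z \<noteq> 0\<close> by simp
  qed
qed

lemma maximal_dominated_graph:
  assumes "dominated_graph G\<^sub>0"
  obtains M where "dominated_graph M" "G\<^sub>0 \<subseteq> M" "\<And>G. dominated_graph G \<Longrightarrow> M \<subseteq> G \<Longrightarrow> G = M"
proof -
  have "\<exists>M\<in>{G. dominated_graph G \<and> G\<^sub>0 \<subseteq> G}. \<forall>G\<in>{G. dominated_graph G \<and> G\<^sub>0 \<subseteq> G}.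
      M \<subseteq> G \<longrightarrow> G = M"
  proof (rule subset_Zorn_nonempty)
    fix C
    assume "C \<noteq> {}" "subset.chain {G. dominated_graph G \<and> G\<^sub>0 \<subseteq> G} C"
    then show "\<Union>C \<in> {G. dominated_graph G \<and> G\<^sub>0 \<subseteq> G}"
      using dominated_graph_chain_Union[of C] by (auto simp: subset_chain_def)
  qed (use assms in auto)
  then show ?thesis
    using that by auto
qed

theorem hahn_banach:
  assumes "e \<in> V" and "\<And>t. t \<le> p (\<lambda>y. t * e y)"
  obtains L where "\<And>g h. g \<in> V \<Longrightarrow> h \<in> V \<Longrightarrow> L (\<lambda>y. g y + h y) = L g + L h"
    and "\<And>g t. g \<in> V \<Longrightarrow> L (\<lambda>y. t * g y) = t * L g"
    and "\<And>g. g \<in> V \<Longrightarrow> L g \<le> p g" and "L e = 1"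
proof -
  obtain M where M: "dominated_graph M" "{((\<lambda>y. t * e y), t) | t. True} \<subseteq> M"
    and M_maximal: "\<And>G. dominated_graph G \<Longrightarrow> M \<subseteq> G \<Longrightarrow> G = M"
    using maximal_dominated_graph[OF dominated_graph_line[OF assms]] by blast
  have e_one: "(e, 1) \<in> M" and "M \<noteq> {}"
    using M(2) by force+
  have total: "\<exists>a. (g, a) \<in> M" if "g \<in> V" for g
    using dominated_graph_extend[OF M(1) \<open>M \<noteq> {}\<close> that] M_maximal by blast
  define L where "L g = (THE a. (g, a) \<in> M)" for g
  have graph_L: "(g, L g) \<in> M" if "g \<in> V" for g
    unfolding L_def using total[OF that] dominated_graph_unique[OF M(1)] by (metis theI)
  have L_eq: "L g = a" if "(g, a) \<in> M" for g a
    using dominated_graph_unique[OF M(1) graph_L that] dominated_graph_subset[OF M(1) that] by blast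
  show ?thesis
  proof
    show "L (\<lambda>y. g y + h y) = L g + L h" if "g \<in> V" "h \<in> V" for g h
      using that by (intro L_eq dominated_graph_add[OF M(1)] graph_L)
    show "L (\<lambda>y. t * g y) = t * L g" if "g \<in> V" for g t
      using that by (intro L_eq dominated_graph_scale[OF M(1)] graph_L)
    show "L g \<le> p g" if "g \<in> V" for g
      using that by (intro dominated_graph_le[OF M(1)] graph_L)
    show "L e = 1"
      using e_one by (rule L_eq)
  qed
qed

end

section \<open>Borel measures from finitely additive contents on compact metric spaces\<close>

text \<open>The pieces are chosen according to which of the two complements is farther away.\<close>

lemma closed_split_open_Un:
  fixes C U U' :: "'a::metric_space set"
  assumes "closed C" "C \<subseteq> U \<union> U'" and "open U" "open U'"
  obtains C\<^sub>1 C\<^sub>2 where "closed C\<^sub>1" "closed C\<^sub>2" "C\<^sub>1 \<subseteq> U" "C\<^sub>2 \<subseteq> U'" "C = C\<^sub>1 \<union> C\<^sub>2"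
proof (cases "U = UNIV \<or> U' = UNIV")
  case True
  then show ?thesis
    using that[of C "{}"] that[of "{}" C] assms(1) by auto
next
  case False
  have piece: "C \<inter> {x. infdist x (- W') \<le> infdist x (- W)} \<subseteq> W"
    if "open W'" "W' \<noteq> UNIV" "C \<subseteq> W \<union> W'" for W W'
  proof
    fix x
    assume x: "x \<in> C \<inter> {x. infdist x (- W') \<le> infdist x (- W)}"
    show "x \<in> W"
    proof (rule ccontr)
      assume "x \<notin> W"
      then have "infdist x (- W') = 0"
        using x infdist_nonneg[of x "- W'"] by (simp add: infdist_zero)
      then have "x \<in> - W'"
        using in_closed_iff_infdist_zero[of "- W'" x] that by auto
      then show False
        using x \<open>x \<notin> W\<close> that(3) by auto
    qed
  qed
  show ?thesis
  proof (rule that)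
    show "closed (C \<inter> {x. infdist x (- U') \<le> infdist x (- U)})"
      and "closed (C \<inter> {x. infdist x (- U) \<le> infdist x (- U')})"
      using assms(1) by (auto intro!: closed_Int closed_Collect_le continuous_intros)
    show "C \<inter> {x. infdist x (- U') \<le> infdist x (- U)} \<subseteq> U"
      and "C \<inter> {x. infdist x (- U) \<le> infdist x (- U')} \<subseteq> U'"
      using piece[of U' U] piece[of U U'] assms False by auto
  qed auto
qed

locale normalized_content =
  fixes \<nu> :: "'a::metric_space set \<Rightarrow> real"
  assumes compact_UNIV: "compact (UNIV :: 'a set)"
    and nonneg: "0 \<le> \<nu> A"
    and additive: "A \<inter> B = {} \<Longrightarrow> \<nu> (A \<union> B) = \<nu> A + \<nu> B"
    and normalized: "\<nu> UNIV = 1"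
begin

lemma content_empty: "\<nu> {} = 0"
  using additive[of "{}" "{}"] by simp

lemma content_mono: "A \<subseteq> B \<Longrightarrow> \<nu> A \<le> \<nu> B"
  using additive[of A "B - A"] nonneg[of "B - A"] by (simp add: Un_absorb1)

lemma content_subadditive: "\<nu> (A \<union> B) \<le> \<nu> A + \<nu> B"
  using additive[of A "B - A"] content_mono[of "B - A" B] by simp

lemma content_le_1: "\<nu> A \<le> 1"
  using content_mono[of A UNIV] normalized by simp

definition inner_content :: "'a set \<Rightarrow> real" where
  "inner_content U = Sup {\<nu> C | C. closed C \<and> C \<subseteq> U}"

lemma inner_content_upper: "closed C \<Longrightarrow> C \<subseteq> U \<Longrightarrow> \<nu> C \<le> inner_content U"
  unfolding inner_content_def by (rule cSup_upper) (auto intro!: bdd_aboveI[of _ 1] content_le_1)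

lemma inner_content_least:
  "(\<And>C. closed C \<Longrightarrow> C \<subseteq> U \<Longrightarrow> \<nu> C \<le> b) \<Longrightarrow> inner_content U \<le> b"
  unfolding inner_content_def by (rule cSup_least) auto

lemma inner_content_nonneg: "0 \<le> inner_content U"
  using inner_content_upper[of "{}" U] content_empty by simp

lemma inner_content_approx:
  assumes "e > 0"
  obtains C where "closed C" "C \<subseteq> U" "inner_content U - e < \<nu> C"
  using inner_content_least[of U "inner_content U - e"] assms by force

lemma inner_content_UNIV: "inner_content UNIV = 1"
  using inner_content_upper[of UNIV UNIV] inner_content_least[of UNIV 1] content_le_1 normalized by force

lemma inner_content_empty: "inner_content {} = 0"
  using inner_content_least[of "{}" 0] inner_content_nonneg[of "{}"] content_empty by force

lemma inner_content_Un_le: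
  assumes "open U" "open U'"
  shows "inner_content (U \<union> U') \<le> inner_content U + inner_content U'"
proof (rule inner_content_least)
  fix C
  assume "closed C" "C \<subseteq> U \<union> U'"
  then obtain C\<^sub>1 C\<^sub>2 where C: "closed C\<^sub>1" "closed C\<^sub>2" "C\<^sub>1 \<subseteq> U" "C\<^sub>2 \<subseteq> U'" "C = C\<^sub>1 \<union> C\<^sub>2"
    using assms by (rule closed_split_open_Un)
  have "\<nu> C \<le> \<nu> C\<^sub>1 + \<nu> C\<^sub>2"
    unfolding C(5) by (rule content_subadditive)
  also have "\<dots> \<le> inner_content U + inner_content U'"
    using inner_content_upper[OF C(1,3)] inner_content_upper[OF C(2,4)] by simp
  finally show "\<nu> C \<le> inner_content U + inner_content U'" .
qed

lemma inner_content_UN_le: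
  fixes U :: "nat \<Rightarrow> 'a set"
  assumes "\<And>i. open (U i)"
  shows "inner_content (\<Union>i<N. U i) \<le> (\<Sum>i<N. inner_content (U i))"
proof (induction N)
  case 0
  then show ?case
    using inner_content_empty by simp
next
  case (Suc N)
  have "inner_content (\<Union>i<Suc N. U i) \<le> inner_content (\<Union>i<N. U i) + inner_content (U N)"
    using inner_content_Un_le[of "\<Union>i<N. U i" "U N"] assms by (auto simp: lessThan_Suc Un_commute)
  then show ?case
    using Suc by simp
qed

text \<open>By compactness, every closed subset of the union is already covered by finitely many
  of the sets.\<close>

lemma inner_content_countable_UN_le:
  assumes "\<And>i. open (U i)"
  shows "ennreal (inner_content (\<Union>i. U i)) \<le> (\<Sum>i. ennreal (inner_content (U i)))"
proof (cases "(\<Sum>i. ennreal (inner_content (U i))) = top")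
  case False
  then obtain S where S: "(\<Sum>i. ennreal (inner_content (U i))) = ennreal S" "0 \<le> S"
    using ennreal_cases[of "\<Sum>i. ennreal (inner_content (U i))"] by auto
  have "inner_content (\<Union>i. U i) \<le> S"
  proof (rule inner_content_least)
    fix C
    assume C: "closed C" "C \<subseteq> (\<Union>i. U i)"
    have "compact C"
      using compact_Int_closed[OF compact_UNIV C(1)] by simp
    then obtain I where "finite I" "C \<subseteq> (\<Union>i\<in>I. U i)"
      using C(2) assms by (metis compactE_image)
    moreover obtain N where "I \<subseteq> {..<N}"
      using finite_nat_bounded[OF \<open>finite I\<close>] by blast
    ultimately have "C \<subseteq> (\<Union>i<N. U i)"
      by blast
    then have "\<nu> C \<le> inner_content (\<Union>i<N. U i)"
      by (rule inner_content_upper[OF C(1)])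
    also have "\<dots> \<le> (\<Sum>i<N. inner_content (U i))"
      by (rule inner_content_UN_le[OF assms])
    finally have "\<nu> C \<le> (\<Sum>i<N. inner_content (U i))" .
    then have "ennreal (\<nu> C) \<le> (\<Sum>i<N. ennreal (inner_content (U i)))"
      using inner_content_nonneg by (simp add: sum_ennreal ennreal_leI)
    also have "\<dots> \<le> (\<Sum>i. ennreal (inner_content (U i)))"
      by (rule sum_le_suminf) (auto intro: summableI)
    finally show "\<nu> C \<le> S"
      using S by (simp add: ennreal_le_iff)
  qed
  then show ?thesis
    using S by (simp add: ennreal_leI)
qed simp

definition outer_content :: "'a set \<Rightarrow> real" where
  "outer_content A = Inf {inner_content U | U. open U \<and> A \<subseteq> U}"

lemma outer_content_lower: "open U \<Longrightarrow> A \<subseteq> U \<Longrightarrow> outer_content A \<le> inner_content U"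
  unfolding outer_content_def
  by (rule cInf_lower) (auto intro!: bdd_belowI[of _ 0] inner_content_nonneg)

lemma outer_content_greatest:
  "(\<And>U. open U \<Longrightarrow> A \<subseteq> U \<Longrightarrow> b \<le> inner_content U) \<Longrightarrow> b \<le> outer_content A"
  unfolding outer_content_def by (rule cInf_greatest) auto

lemma outer_content_nonneg: "0 \<le> outer_content A"
  by (rule outer_content_greatest) (rule inner_content_nonneg)

lemma outer_content_approx:
  assumes "e > 0"
  obtains U where "open U" "A \<subseteq> U" "inner_content U < outer_content A + e"
  using outer_content_greatest[of A "outer_content A + e"] assms by force

lemma outer_content_mono: "A \<subseteq> B \<Longrightarrow> outer_content A \<le> outer_content B"
  by (rule outer_content_greatest) (auto intro: outer_content_lower)

lemma outer_content_empty: "outer_content {} = 0"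
  using outer_content_lower[of "{}" "{}"] outer_content_nonneg[of "{}"] inner_content_empty by simp

lemma outer_content_UNIV: "outer_content UNIV = 1"
proof (rule antisym)
  show "outer_content UNIV \<le> 1"
    using outer_content_lower[of UNIV UNIV] inner_content_UNIV by simp
  show "1 \<le> outer_content UNIV"
    by (rule outer_content_greatest) (simp add: top.extremum_unique inner_content_UNIV)
qed

lemma outer_content_Un_le: "outer_content (A \<union> B) \<le> outer_content A + outer_content B"
proof (rule field_le_epsilon)
  fix e :: real
  assume "e > 0"
  then obtain U U' where "open U" "A \<subseteq> U" "inner_content U < outer_content A + e / 2"
    and "open U'" "B \<subseteq> U'" "inner_content U' < outer_content B + e / 2"
    by (metis half_gt_zero outer_content_approx)
  moreover from this have "outer_content (A \<union> B) \<le> inner_content (U \<union> U')"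
    by (intro outer_content_lower) auto
  moreover from calculation have "inner_content (U \<union> U') \<le> inner_content U + inner_content U'"
    by (intro inner_content_Un_le)
  ultimately show "outer_content (A \<union> B) \<le> outer_content A + outer_content B + e"
    by simp
qed

lemma outer_content_split_open:
  assumes "open U"
  shows "outer_content (X \<inter> U) + outer_content (X - U) \<le> outer_content X"
proof (rule outer_content_greatest)
  fix W
  assume W: "open W" "X \<subseteq> W"
  show "outer_content (X \<inter> U) + outer_content (X - U) \<le> inner_content W"
  proof (rule field_le_epsilon)
    fix e :: real
    assume "e > 0"
    then obtain C where C: "closed C" "C \<subseteq> W \<inter> U" "inner_content (W \<inter> U) - e / 2 < \<nu> C"
      by (metis half_gt_zero inner_content_approx)
    obtain D where D: "closed D" "D \<subseteq> W - C" "inner_content (W - C) - e / 2 < \<nu> D"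
      using \<open>e > 0\<close> by (metis half_gt_zero inner_content_approx)
    have "outer_content (X \<inter> U) \<le> inner_content (W \<inter> U)"
      using W assms by (intro outer_content_lower) auto
    moreover have "outer_content (X - U) \<le> inner_content (W - C)"
      using W C by (intro outer_content_lower) auto
    moreover have "\<nu> C + \<nu> D = \<nu> (C \<union> D)"
      using D by (intro additive[symmetric]) auto
    moreover have "\<nu> (C \<union> D) \<le> inner_content W"
      using C D by (intro inner_content_upper) auto
    ultimately show "outer_content (X \<inter> U) + outer_content (X - U) \<le> inner_content W + e"
      using C D by linarith
  qed
qed

lemma outer_content_countably_subadditive:
  "ennreal (outer_content (\<Union>i. A i)) \<le> (\<Sum>i. ennreal (outer_content (A i)))"
proof (rule ennreal_le_epsilon)
  fix e :: real
  assume "0 < e"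
  then have "\<forall>i. \<exists>U. open U \<and> A i \<subseteq> U \<and> inner_content U < outer_content (A i) + e * (1 / 2) ^ Suc i"
    by (metis outer_content_approx mult_pos_pos zero_less_power half_gt_zero_iff zero_less_divide_1_iff
        zero_less_numeral)
  then obtain U where U: "\<And>i. open (U i)" "\<And>i. A i \<subseteq> U i"
    and U_le: "\<And>i. inner_content (U i) < outer_content (A i) + e * (1 / 2) ^ Suc i"
    by metis
  have "(\<lambda>i. e * (1 / 2 :: real) ^ Suc i) sums e"
    using sums_mult[OF power_half_series, of e] by simp
  then have geometric: "(\<Sum>i. ennreal (e * (1 / 2) ^ Suc i)) = ennreal e"
    using \<open>0 < e\<close> by (subst suminf_ennreal2) (auto simp: sums_iff)
  have "ennreal (outer_content (\<Union>i. A i)) \<le> ennreal (inner_content (\<Union>i. U i))"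
    using U by (intro ennreal_leI outer_content_lower) auto
  also have "\<dots> \<le> (\<Sum>i. ennreal (inner_content (U i)))"
    by (rule inner_content_countable_UN_le[OF U(1)])
  also have "\<dots> \<le> (\<Sum>i. ennreal (outer_content (A i)) + ennreal (e * (1 / 2) ^ Suc i))"
  proof (rule suminf_le[OF _ summableI summableI])
    fix i
    have "ennreal (inner_content (U i)) \<le> ennreal (outer_content (A i) + e * (1 / 2) ^ Suc i)"
      using U_le[of i] by (intro ennreal_leI) simp
    then show "ennreal (inner_content (U i))
        \<le> ennreal (outer_content (A i)) + ennreal (e * (1 / 2) ^ Suc i)"
      using outer_content_nonneg[of "A i"] \<open>0 < e\<close> by (simp add: ennreal_plus)
  qed
  also have "\<dots> = (\<Sum>i. ennreal (outer_content (A i))) + ennreal e"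
    unfolding geometric[symmetric] by (rule suminf_add[symmetric]) (auto intro: summableI)
  finally show "ennreal (outer_content (\<Union>i. A i)) \<le> (\<Sum>i. ennreal (outer_content (A i))) + ennreal e" .
qed

lemma open_in_lambda_system:
  assumes "open U"
  shows "U \<in> lambda_system UNIV (Pow UNIV) (\<lambda>A. ennreal (outer_content A))"
  unfolding lambda_system_def
proof (intro CollectI conjI ballI)
  fix X :: "'a set"
  have "outer_content X = outer_content ((U \<inter> X) \<union> (X - U))"
    by (rule arg_cong[where f = outer_content]) blast
  also have "\<dots> \<le> outer_content (U \<inter> X) + outer_content (X - U)"
    by (rule outer_content_Un_le)
  finally have "outer_content X \<le> outer_content (U \<inter> X) + outer_content (X - U)" .
  then have "outer_content (U \<inter> X) + outer_content ((UNIV - U) \<inter> X) = outer_content X"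
    using outer_content_split_open[OF assms, of X] by (simp add: Int_commute Diff_eq)
  then show "ennreal (outer_content (U \<inter> X)) + ennreal (outer_content ((UNIV - U) \<inter> X))
      = ennreal (outer_content X)"
    using outer_content_nonneg by (simp flip: ennreal_plus)
qed auto

definition content_measure :: "'a measure" where
  "content_measure = measure_of UNIV (sets borel) (\<lambda>A. ennreal (outer_content A))"

lemma sets_content_measure [simp]: "sets content_measure = sets borel"
  unfolding content_measure_def
  by (rule sigma_algebra.sets_measure_of_eq) (use sets.sigma_algebra_axioms[of borel] in simp)

lemma emeasure_content_measure:
  assumes "A \<in> sets borel"
  shows "emeasure content_measure A = ennreal (outer_content A)"
proof -
  let ?\<mu> = "\<lambda>A. ennreal (outer_content A)"
  let ?L = "lambda_system UNIV (Pow UNIV) ?\<mu>"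
  have "outer_measure_space (Pow UNIV) ?\<mu>"
    unfolding outer_measure_space_def positive_def increasing_def countably_subadditive_def
    using outer_content_empty outer_content_mono outer_content_countably_subadditive
    by (auto intro: ennreal_leI)
  then have L: "measure_space UNIV ?L ?\<mu>"
    by (rule sigma_algebra.caratheodory_lemma[OF sigma_algebra_Pow])
  then have "sigma_algebra UNIV ?L"
    by (simp add: measure_space_def)
  then have "sets borel \<subseteq> ?L"
    unfolding sets_borel
    by (rule sigma_algebra.sigma_sets_subset) (auto intro: open_in_lambda_system[unfolded Pow_UNIV])
  have "measure_space UNIV (sets borel) ?\<mu>"
    using measure_down[OF L _ \<open>sets borel \<subseteq> ?L\<close>] sets.sigma_algebra_axioms[of borel] by simp
  then show ?thesis
    unfolding content_measure_def using assms
    by (intro emeasure_measure_of_sigma) (auto simp: measure_space_def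
        intro: sets.sigma_algebra_axioms[of borel, simplified])
qed

lemma measure_content_measure: "A \<in> sets borel \<Longrightarrow> measure content_measure A = outer_content A"
  by (simp add: measure_def emeasure_content_measure outer_content_nonneg)

lemma prob_space_content_measure: "prob_space content_measure"
proof (rule prob_spaceI)
  have "space content_measure = UNIV"
    unfolding content_measure_def by (simp add: space_measure_of_conv)
  then show "emeasure content_measure (space content_measure) = 1"
    by (simp add: emeasure_content_measure outer_content_UNIV)
qed

lemma measure_content_measure_open_le:
  assumes "open U" and "\<And>C. closed C \<Longrightarrow> C \<subseteq> U \<Longrightarrow> \<nu> C \<le> b"
  shows "measure content_measure U \<le> b"
  using assms outer_content_lower[of U U] inner_content_least[of U b]
  by (simp add: measure_content_measure)

lemma emeasure_content_measure_closed_eq_1: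
  assumes "closed C" and "\<nu> C = 1"
  shows "emeasure content_measure C = 1"
proof -
  interpret prob_space content_measure
    by (rule prob_space_content_measure)
  have "1 \<le> measure content_measure C"
    using assms outer_content_greatest[of C 1] inner_content_upper[of C]
    by (simp add: measure_content_measure)
  then show ?thesis
    using prob_le_1[of C] by (simp add: emeasure_eq_measure)
qed

end

section \<open>The Frostman-type lemma\<close>

lemma continuous_on_funpow:
  fixes f :: "'a::topological_space \<Rightarrow> 'a"
  assumes "continuous_on UNIV f"
  shows "continuous_on UNIV (f ^^ i)"
proof (induction i)
  case (Suc i)
  then show ?case
    using continuous_on_compose[OF Suc continuous_on_subset[OF assms]] by simp
qed (simp add: continuous_on_id)

lemma bowen_ball_eq_INT:
  assumes "m \<ge> 1"
  shows "bowen_ball f \<alpha> m x \<epsilon>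
    = (\<Inter>i<m. {y. exp (\<alpha> * real i) * dist ((f ^^ i) x) ((f ^^ i) y) < \<epsilon>})"
proof -
  have "{..<m} \<noteq> {}"
    using assms by (simp add: lessThan_empty_iff)
  then show ?thesis
    by (auto simp: bowen_ball_def dist_bowen_def Max_less_iff)
qed

lemma open_bowen_ball:
  assumes "continuous_on UNIV f" and "m \<ge> 1"
  shows "open (bowen_ball f \<alpha> m x \<epsilon>)"
  unfolding bowen_ball_eq_INT[OF assms(2)]
  by (intro open_INT finite_lessThan open_Collect_less continuous_intros ballI
      continuous_on_funpow[OF assms(1)])

definition bounded_functions :: "('a \<Rightarrow> real) set" where
  "bounded_functions = {g. \<exists>B. \<forall>y. \<bar>g y\<bar> \<le> B}"

lemma indicator_in_bounded_functions: "indicator A \<in> bounded_functions"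
  unfolding bounded_functions_def by (auto intro!: exI[of _ 1] simp: indicator_def)

lemma bounded_functions_add:
  assumes "g \<in> bounded_functions" and "h \<in> bounded_functions"
  shows "(\<lambda>y. g y + h y) \<in> bounded_functions"
proof -
  obtain B B' where "\<And>y. \<bar>g y\<bar> \<le> B" "\<And>y. \<bar>h y\<bar> \<le> B'"
    using assms by (auto simp: bounded_functions_def)
  then have "\<bar>g y + h y\<bar> \<le> B + B'" for y
    using abs_triangle_ineq[of "g y" "h y"] by (smt (verit))
  then show ?thesis
    unfolding bounded_functions_def by blast
qed

lemma bounded_functions_scale:
  assumes "g \<in> bounded_functions"
  shows "(\<lambda>y. t * g y) \<in> bounded_functions"
proof -
  obtain B where "\<And>y. \<bar>g y\<bar> \<le> B"
    using assms by (auto simp: bounded_functions_def)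
  then have "\<bar>t * g y\<bar> \<le> \<bar>t\<bar> * B" for y
    by (simp add: abs_mult mult_left_mono)
  then show ?thesis
    unfolding bounded_functions_def by blast
qed

lemma W_alpha_weighted_finite:
  assumes "g \<in> bounded_functions" and "W_alpha_set f \<alpha> K s \<epsilon> n \<phi> < top"
  shows "W_alpha f \<alpha> (\<lambda>y. indicator K y * g y) s \<epsilon> n \<phi> < top"
proof -
  obtain B where B: "\<And>y. \<bar>g y\<bar> \<le> B"
    using assms(1) by (auto simp: bounded_functions_def)
  have "W_alpha f \<alpha> (\<lambda>y. indicator K y * g y) s \<epsilon> n \<phi>
      \<le> W_alpha f \<alpha> (\<lambda>y. max B 1 * indicator K y) s \<epsilon> n \<phi>"
    by (rule W_alpha_mono) (use B in \<open>auto simp: indicator_def abs_le_iff le_max_iff_disj\<close>)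
  also have "\<dots> \<le> ennreal (max B 1) * W_alpha_set f \<alpha> K s \<epsilon> n \<phi>"
    unfolding W_alpha_set_def by (rule W_alpha_scale_le) simp
  also have "\<dots> < top"
    using assms(2) by (simp add: ennreal_mult_less_top)
  finally show ?thesis .
qed

lemma sublinear_functional_W_alpha:
  assumes "W_alpha_set f \<alpha> K s \<epsilon> n \<phi> < top" and "c > 0"
  shows "sublinear_functional bounded_functions
    (\<lambda>g. enn2real (W_alpha f \<alpha> (\<lambda>y. indicator K y * g y) s \<epsilon> n \<phi>) / c)"
proof (rule sublinear_functional.intro)
  fix g h :: "'a \<Rightarrow> real" and t :: real
  assume g: "g \<in> bounded_functions"
  then show "(\<lambda>y. t * g y) \<in> bounded_functions"
    by (rule bounded_functions_scale)
  {
    assume h: "h \<in> bounded_functions"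
    with g show "(\<lambda>y. g y + h y) \<in> bounded_functions"
      by (rule bounded_functions_add)
    let ?W = "\<lambda>g. W_alpha f \<alpha> (\<lambda>y. indicator K y * g y) s \<epsilon> n \<phi>"
    have "?W (\<lambda>y. g y + h y) \<le> ?W g + ?W h"
      by (rule W_alpha_add_le) (simp add: distrib_left)
    then have "enn2real (?W (\<lambda>y. g y + h y)) \<le> enn2real (?W g + ?W h)"
      using W_alpha_weighted_finite[OF g assms(1)] W_alpha_weighted_finite[OF h assms(1)]
      by (intro enn2real_mono) simp_all
    also have "\<dots> = enn2real (?W g) + enn2real (?W h)"
      using W_alpha_weighted_finite[OF g assms(1)] W_alpha_weighted_finite[OF h assms(1)]
      by (intro enn2real_plus) simp_all
    finally show "enn2real (?W (\<lambda>y. g y + h y)) / c \<le> enn2real (?W g) / c + enn2real (?W h) / c"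
      using assms(2) by (simp add: divide_right_mono flip: add_divide_distrib)
  }
  assume "t > 0"
  then show "enn2real (W_alpha f \<alpha> (\<lambda>y. indicator K y * (t * g y)) s \<epsilon> n \<phi>) / c
      = t * (enn2real (W_alpha f \<alpha> (\<lambda>y. indicator K y * g y) s \<epsilon> n \<phi>) / c)"
    using W_alpha_scale[of t f \<alpha> "\<lambda>y. indicator K y * g y"]
    by (simp add: enn2real_mult mult.left_commute)
qed

lemma W_alpha_dominated_functional:
  assumes W: "W_alpha_set f \<alpha> K s \<epsilon> n \<phi> = ennreal c" and "c > 0"
  obtains L where "\<And>g h. g \<in> bounded_functions \<Longrightarrow> h \<in> bounded_functions
      \<Longrightarrow> L (\<lambda>y. g y + h y) = L g + L h"
    and "\<And>g t. g \<in> bounded_functions \<Longrightarrow> L (\<lambda>y. t * g y) = t * L g"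
    and "\<And>g. g \<in> bounded_functions
      \<Longrightarrow> L g \<le> enn2real (W_alpha f \<alpha> (\<lambda>y. indicator K y * g y) s \<epsilon> n \<phi>) / c"
    and "L (\<lambda>_. 1) = 1"
proof -
  define p where "p g = enn2real (W_alpha f \<alpha> (\<lambda>y. indicator K y * g y) s \<epsilon> n \<phi>) / c" for g
  interpret sublinear_functional bounded_functions p
    unfolding p_def using assms by (intro sublinear_functional_W_alpha) simp_all
  have p_one: "t \<le> p (\<lambda>y. t * 1)" for t
  proof (cases "t > 0")
    case True
    then show ?thesis
      using positively_homogeneous[OF indicator_in_bounded_functions[of UNIV], of t] W \<open>c > 0\<close>
      by (simp add: p_def W_alpha_set_def)
  next
    case False
    then show ?thesis
      using \<open>c > 0\<close> by (simp add: p_def order_trans[OF _ divide_nonneg_pos])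
  qed
  show ?thesis
    using hahn_banach[of "\<lambda>_. 1"] indicator_in_bounded_functions[of UNIV] p_one that
    unfolding p_def by auto
qed

lemma W_alpha_frostman_content:
  assumes "W_alpha_set f \<alpha> K s \<epsilon> n \<phi> = ennreal c" and "c > 0"
  obtains \<nu> :: "'a::metric_space set \<Rightarrow> real"
  where "\<And>A. 0 \<le> \<nu> A" and "\<And>A B. A \<inter> B = {} \<Longrightarrow> \<nu> (A \<union> B) = \<nu> A + \<nu> B"
    and "\<nu> UNIV = 1" and "\<nu> K = 1"
    and "\<And>A m x. n \<le> m \<Longrightarrow> A \<subseteq> bowen_ball f \<alpha> m x \<epsilon>
      \<Longrightarrow> \<nu> A \<le> (1 / c) * exp (- s * birkhoff_sum f \<phi> m x)"
proof -
  obtain L where L_add: "\<And>g h. g \<in> bounded_functions \<Longrightarrow> h \<in> bounded_functions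
      \<Longrightarrow> L (\<lambda>y. g y + h y) = L g + L h"
    and L_scale: "\<And>g t. g \<in> bounded_functions \<Longrightarrow> L (\<lambda>y. t * g y) = t * L g"
    and L_le: "\<And>g. g \<in> bounded_functions
      \<Longrightarrow> L g \<le> enn2real (W_alpha f \<alpha> (\<lambda>y. indicator K y * g y) s \<epsilon> n \<phi>) / c"
    and L_one: "L (\<lambda>_. 1) = 1"
    using W_alpha_dominated_functional[OF assms] by blast
  define \<nu> where "\<nu> A = L (indicator A)" for A :: "'a set"
  have L_nonpos: "L g \<le> 0" if "g \<in> bounded_functions" "\<And>y. y \<in> K \<Longrightarrow> g y \<le> 0" for g
    using L_le[OF that(1)] that(2) by (subst (asm) W_alpha_nonpos) (auto simp: indicator_def)
  have nonneg: "0 \<le> \<nu> A" for A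
    using L_nonpos[OF bounded_functions_scale[OF indicator_in_bounded_functions[of A], of "-1"]]
      L_scale[OF indicator_in_bounded_functions[of A], of "-1"]
    by (simp add: \<nu>_def indicator_def)
  have additive: "\<nu> (A \<union> B) = \<nu> A + \<nu> B" if "A \<inter> B = {}" for A B
  proof -
    have "indicator (A \<union> B) = (\<lambda>y. indicator A y + indicator B y :: real)"
      using that by (auto simp: indicator_def fun_eq_iff)
    then show ?thesis
      using L_add[OF indicator_in_bounded_functions indicator_in_bounded_functions, of A B]
      by (simp add: \<nu>_def)
  qed
  have "\<nu> UNIV = 1"
    using L_one by (simp add: \<nu>_def)
  moreover have "\<nu> (- K) \<le> 0"
    using L_nonpos[OF indicator_in_bounded_functions, of "- K"] by (simp add: \<nu>_def)
  ultimately have "\<nu> K = 1"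
    using additive[of K "- K"] nonneg[of "- K"] by simp
  moreover have "\<nu> A \<le> (1 / c) * exp (- s * birkhoff_sum f \<phi> m x)"
    if "n \<le> m" "A \<subseteq> bowen_ball f \<alpha> m x \<epsilon>" for A m x
  proof -
    have "W_alpha f \<alpha> (\<lambda>y. indicator K y * indicator A y) s \<epsilon> n \<phi>
        \<le> ennreal (exp (- s * birkhoff_sum f \<phi> m x))"
      using that by (intro W_alpha_le_bowen_ball) (auto simp: indicator_def)
    then show ?thesis
      using L_le[OF indicator_in_bounded_functions, of A] \<open>c > 0\<close>
      by (simp add: \<nu>_def enn2real_leI divide_right_mono order_trans)
  qed
  ultimately show ?thesis
    using that[of \<nu>] nonneg additive \<open>\<nu> UNIV = 1\<close> by blast
qed

theorem mainTheorem9: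
  fixes f :: "'a::metric_space \<Rightarrow> 'a" and \<phi> :: "'a \<Rightarrow> real" and K :: "'a set"
    and \<alpha> s \<epsilon> c :: real and n :: nat
  assumes "compact (UNIV :: 'a set)" and "continuous_on UNIV f"
    and "\<alpha> \<ge> 0" and "s > 0" and "n \<ge> 1" and "\<epsilon> > 0"
    and "continuous_on UNIV \<phi>" and "\<forall>x. \<phi> x > 0"
    and "K \<noteq> {}" and "compact K"
    and "W_alpha_set f \<alpha> K s \<epsilon> n \<phi> = ennreal c" and "c > 0"
  shows "\<exists>\<mu>. sets \<mu> = sets borel \<and> prob_space \<mu> \<and> emeasure \<mu> K = 1 \<and>
           (\<forall>x m. n \<le> m \<longrightarrow>
              measure \<mu> (bowen_ball f \<alpha> m x \<epsilon>) \<le> (1 / c) * exp (- s * birkhoff_sum f \<phi> m x))"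
proof -
  obtain \<nu> where \<nu>: "normalized_content \<nu>" and "\<nu> K = 1"
    and \<nu>_ball: "\<And>A m x. n \<le> m \<Longrightarrow> A \<subseteq> bowen_ball f \<alpha> m x \<epsilon>
      \<Longrightarrow> \<nu> A \<le> (1 / c) * exp (- s * birkhoff_sum f \<phi> m x)"
    using W_alpha_frostman_content[OF assms(11,12)] assms(1) by (metis normalized_content.intro)
  interpret normalized_content \<nu>
    by (rule \<nu>)
  have "emeasure content_measure K = 1"
    using compact_imp_closed[OF assms(10)] \<open>\<nu> K = 1\<close> by (rule emeasure_content_measure_closed_eq_1)
  moreover have "measure content_measure (bowen_ball f \<alpha> m x \<epsilon>)
      \<le> (1 / c) * exp (- s * birkhoff_sum f \<phi> m x)" if "n \<le> m" for x m
    using that assms(5)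
    by (intro measure_content_measure_open_le open_bowen_ball[OF assms(2)] \<nu>_ball) simp_all
  ultimately show ?thesis
    using sets_content_measure prob_space_content_measure by blast
qed

end
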